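(* Consider the data-selling model described in the context, with network $G$ on $n$ buyers, and assume $z_0<\frac{1}{2\sqrt{\gamma}}\cdot\frac{n+1}{2n+1}$. Let $m=\alpha(G)$, and let $C$ and $C'$ be optimal contracts. (Their target sets $M(C),M(C')$ are maximum independent sets of size $m$, and both have common precision $z=\sqrt{m/\gamma}-z_0$.) Let $k(C)=(m_1,\dots,m_{n-m})$ be the values $m_i=|N_i\cap M(C)|$ for $i\in N\setminus M(C)$, arranged in non-increasing order. Define $k(C')=(m'_1,\dots,m'_{n-m})$ in the same way. Then $w(z_0,G,M(C))\ge w(z_0,G,M(C'))$ if either of the following holds: (i) $k(C)\ge k(C')$ componentwise; (ii) $\sum_{i=1}^{n-m}m_i=\sum_{i=1}^{n-m}m'_i$, and $k(C)$ dominates $k(C')$ in the second-order stochastic dominance sense (that is, the uniform distribution on the entries of $k(C)$ second-order stochastically dominates the uniform distribution on the entries of $k(C')$).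
   Context: Model. There is a finite set of buyers $N=\{1,\dots,n\}$ and an undirected network $G$ on $N$: for $i\neq j$, $g_{ij}=g_{ji}\in\{0,1\}$, with $g_{ij}=1$ iff $i$ and $j$ are linked. $N_i=\{j\neq i:g_{ij}=1\}$ is the set of neighbors of $i$. A state $\theta\sim N(0,1/z_0)$ with $z_0>0$ is unknown to all. A contract $C$ of the seller consists of a target set $M(C)\subseteq N$, a common precision $z>0$, and prices $p_i\ge0$ for $i\in M(C)$. Each $i\in M(C)$ receives a signal $s_i=\theta+\varepsilon_i$, with $\varepsilon_i\sim N(0,1/z)$ independent. Each buyer observes the signals of his neighbors in $M(C)$ (and his own if he is in $M(C)$) and then chooses $a_i$ to maximize $E[-(a_i-\theta)^2]$. With $m_i=|N_i\cap M(C)|$, buyer $i\in M(C)$ gets expected payoff $-\frac{1}{z_0+(m_i+1)z}-p_i$, and buyer $i\notin M(C)$ gets $-\frac{1}{z_0+m_iz}$. Buyer $i\in M(C)$ accepts iff $p_i\le \frac{1}{z_0+m_iz}-\frac{1}{z_0+(m_i+1)z}$. A contract is feasible if every $i\in M(C)$ accepts. The seller's profit is $\pi(C)=\sum_{i\in M(C)}p_i-\gamma z$ with $\gamma>0$. An optimal contract is a feasible contract maximizing $\pi$. A maximum independent set is a largest set of pairwise unlinked buyers, and $\alpha(G)$ is its size. At an optimal contract (with prices $p_i=\frac1{z_0}-\sqrt{\gamma/m}$ and $z=\sqrt{m/\gamma}-z_0$), the consumer welfare (the sum of buyers' expected payoffs) is $$w(z_0,G,M(C))=-\sum_{i\in M(C)}\frac{1}{z_0}-\sum_{i\in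 N\setminus M(C)}\frac{1}{z_0+m_i\left(\sqrt{m/\gamma}-z_0\right)}.$$ *)

theory Defs
  imports "HOL-Analysis.Analysis" "HOL-Library.Multiset"
begin

text \<open>Network: finite buyer set V, adjacency relation E (assumed symmetric and
irreflexive on V in the theorem).\<close>

definition nbrs :: "'a set \<Rightarrow> ('a \<Rightarrow> 'a \<Rightarrow> bool) \<Rightarrow> 'a \<Rightarrow> 'a set" where
  "nbrs V E i = {j \<in> V. j \<noteq> i \<and> E i j}"

definition independent :: "'a set \<Rightarrow> ('a \<Rightarrow> 'a \<Rightarrow> bool) \<Rightarrow> 'a set \<Rightarrow> bool" where
  "independent V E S \<longleftrightarrow> S \<subseteq> V \<and> (\<forall>i\<in>S. \<forall>j\<in>S. i \<noteq> j \<longrightarrow> \<not> E i j)"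

definition alpha :: "'a set \<Rightarrow> ('a \<Rightarrow> 'a \<Rightarrow> bool) \<Rightarrow> nat" where
  "alpha V E = Max {card S | S. independent V E S}"

definition mcount :: "'a set \<Rightarrow> ('a \<Rightarrow> 'a \<Rightarrow> bool) \<Rightarrow> 'a set \<Rightarrow> 'a \<Rightarrow> nat" where
  "mcount V E M i = card (nbrs V E i \<inter> M)"

text \<open>A contract: (target set, common precision z, prices p).\<close>
type_synonym 'a contract = "'a set \<times> real \<times> ('a \<Rightarrow> real)"

definition feasible :: "'a set \<Rightarrow> ('a \<Rightarrow> 'a \<Rightarrow> bool) \<Rightarrow> real \<Rightarrow> 'a contract \<Rightarrow> bool" where
  "feasible V E z0 C = (case C of (M, z, p) \<Rightarrow>
     M \<subseteq> V \<and> z > 0 \<and>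
     (\<forall>i\<in>M. p i \<ge> 0 \<and>
        p i \<le> 1 / (z0 + real (mcount V E M i) * z) - 1 / (z0 + (real (mcount V E M i) + 1) * z)))"

definition profit :: "real \<Rightarrow> 'a contract \<Rightarrow> real" where
  "profit \<gamma> C = (case C of (M, z, p) \<Rightarrow> (\<Sum>i\<in>M. p i) - \<gamma> * z)"

definition optimal :: "'a set \<Rightarrow> ('a \<Rightarrow> 'a \<Rightarrow> bool) \<Rightarrow> real \<Rightarrow> real \<Rightarrow> 'a contract \<Rightarrow> bool" where
  "optimal V E z0 \<gamma> C \<longleftrightarrow> feasible V E z0 C \<and>
     (\<forall>C'. feasible V E z0 C' \<longrightarrow> profit \<gamma> C' \<le> profit \<gamma> C)"

definition target :: "'a contract \<Rightarrow> 'a set" where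
  "target C = fst C"

text \<open>Consumer welfare at an optimal contract with target set M (formula from the paper,
with m = alpha(G)).\<close>
definition welfare :: "'a set \<Rightarrow> ('a \<Rightarrow> 'a \<Rightarrow> bool) \<Rightarrow> real \<Rightarrow> real \<Rightarrow> 'a set \<Rightarrow> real" where
  "welfare V E z0 \<gamma> M =
     - (\<Sum>i\<in>M. 1 / z0)
     - (\<Sum>i\<in>V - M. 1 / (z0 + real (mcount V E M i) * (sqrt (real (alpha V E) / \<gamma>) - z0)))"

definition kvec :: "'a set \<Rightarrow> ('a \<Rightarrow> 'a \<Rightarrow> bool) \<Rightarrow> 'a set \<Rightarrow> nat list" where
  "kvec V E M = rev (sorted_list_of_multiset (image_mset (mcount V E M) (mset_set (V - M))))"

definition ssd :: "real list \<Rightarrow> real list \<Rightarrow> bool" where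
  "ssd xs ys \<longleftrightarrow> (\<forall>u :: real \<Rightarrow> real. mono u \<and> concave_on UNIV u \<longrightarrow>
      sum_list (map u ys) / real (length ys) \<le> sum_list (map u xs) / real (length xs))"

end

theory Submission
  imports Defs
begin

text \<open>Selling to \<open>m\<close> pairwise unlinked buyers earns at most
  \<open>m / z0 - 2 * sqrt (\<gamma> * m) + \<gamma> * z0\<close>, which increases with \<open>m\<close> when \<open>z0\<close> is small.
  A buyer with \<open>k \<ge> 1\<close> targeted neighbours pays at most \<open>2 / (5 * (k + 1) * z0)\<close>, so by the
  Caro--Wei bound the linked part of a target set earns less than what adding an independent
  subset of it to the isolated part would earn.  Hence optimal target sets are maximum
  independent sets, and the welfare becomes \<open>- \<alpha> / z0 - \<Sum> f m\<^sub>i\<close> with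
  \<open>f k = 1 / (z0 + k * z)\<close> decreasing and convex.  This gives (i) termwise, and (ii) by testing
  the dominance against the concave nondecreasing envelope of the tangents of \<open>- f\<close>.\<close>

definition max_price :: "real \<Rightarrow> real \<Rightarrow> nat \<Rightarrow> real" where
  "max_price z0 z k = 1 / (z0 + real k * z) - 1 / (z0 + (real k + 1) * z)"

text \<open>The profit from \<open>m\<close> pairwise unlinked buyers at the optimal precision
  \<open>sqrt (m / \<gamma>) - z0\<close>.\<close>

definition indep_profit :: "real \<Rightarrow> real \<Rightarrow> real \<Rightarrow> real" where
  "indep_profit z0 \<gamma> m = m / z0 - 2 * sqrt \<gamma> * sqrt m + \<gamma> * z0"

lemma max_price_0: "max_price z0 z 0 = 1 / z0 - 1 / (z0 + z)"
  by (simp add: max_price_def)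

lemma max_price_nonneg:
  assumes "z0 > 0" "z \<ge> 0"
  shows "max_price z0 z k \<ge> 0"
proof -
  have "0 < z0 + real k * z" "z0 + real k * z \<le> z0 + (real k + 1) * z"
    using assms by (auto simp: add_pos_nonneg algebra_simps)
  then show ?thesis unfolding max_price_def by (simp add: frac_le)
qed

text \<open>\<open>max_price z0 z k \<le> 1 / ((4 * k + 1) * z0)\<close>, the maximum over \<open>z\<close>; this is at most
  \<open>2 / (5 * (k + 1) * z0)\<close> as soon as \<open>k \<ge> 1\<close>.\<close>

lemma max_price_le:
  assumes "z0 > 0" "z > 0" "k \<ge> 1"
  shows "max_price z0 z k \<le> 2 / (5 * (real k + 1) * z0)"
proof -
  have pos: "z0 + real k * z > 0" "z0 + (real k + 1) * z > 0"
    using assms by (auto intro!: add_pos_nonneg)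
  have "(4 * real k + 1) * z0 * z \<le> (z0 + real k * z) * (z0 + (real k + 1) * z)"
  proof -
    have "0 \<le> (z0 - real k * z)\<^sup>2 + real k * z\<^sup>2" by simp
    then show ?thesis by (simp add: power2_eq_square algebra_simps)
  qed
  then have "z / ((z0 + real k * z) * (z0 + (real k + 1) * z)) \<le> z / ((4 * real k + 1) * z0 * z)"
    using pos assms by (intro divide_left_mono) auto
  also have "\<dots> = 1 / ((4 * real k + 1) * z0)" using assms by simp
  also have "\<dots> \<le> 2 / (5 * (real k + 1) * z0)" using assms by (simp add: divide_simps)
  finally show ?thesis using pos by (simp add: max_price_def field_simps)
qed

lemma unlinked_profit_le_indep_profit:
  assumes "m \<ge> 0" "z0 > 0" "z > 0" "\<gamma> \<ge> 0"
  shows "m * max_price z0 z 0 - \<gamma> * z \<le> indep_profit z0 \<gamma> m"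
proof -
  define w where "w = z0 + z"
  have w: "w > 0" using assms w_def by simp
  have "sqrt (m / w * (\<gamma> * w)) \<le> (m / w + \<gamma> * w) / 2"
    using assms w by (intro arith_geo_mean_sqrt) auto
  moreover have "m / w * (\<gamma> * w) = \<gamma> * m" using w by simp
  ultimately have "2 * sqrt \<gamma> * sqrt m \<le> m / w + \<gamma> * w" by (simp add: real_sqrt_mult)
  then show ?thesis
    unfolding max_price_0 indep_profit_def w_def by (simp add: algebra_simps)
qed

lemma unlinked_profit_at_optimal_precision:
  assumes "m > 0" "\<gamma> > 0"
  shows "m * max_price z0 (sqrt (m / \<gamma>) - z0) 0 - \<gamma> * (sqrt (m / \<gamma>) - z0) = indep_profit z0 \<gamma> m"
proof -
  have "sqrt \<gamma> > 0" "sqrt m > 0" using assms by auto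
  moreover have "m = (sqrt m)\<^sup>2" "\<gamma> = (sqrt \<gamma>)\<^sup>2" using assms by auto
  ultimately show ?thesis
    unfolding max_price_0 indep_profit_def real_sqrt_divide
    by (simp add: field_simps power2_eq_square)
qed

lemma indep_profit_strict_mono:
  assumes "0 \<le> m" "m < a" "1 \<le> a" "z0 > 0" "2 * sqrt \<gamma> * z0 < 1"
  shows "indep_profit z0 \<gamma> m < indep_profit z0 \<gamma> a"
proof -
  define p q where "p = sqrt m" and "q = sqrt a"
  have p: "p \<ge> 0" "p < q" "q \<ge> 1" using assms unfolding p_def q_def by auto
  have "2 * sqrt \<gamma> < 1 / z0" using assms by (simp add: field_simps)
  also have "\<dots> \<le> (q + p) / z0" using p assms by (simp add: divide_right_mono)
  finally have "2 * sqrt \<gamma> * (q - p) < (q + p) / z0 * (q - p)"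
    using p by (intro mult_strict_right_mono) auto
  also have "\<dots> = (q\<^sup>2 - p\<^sup>2) / z0" by (simp add: power2_eq_square algebra_simps)
  also have "q\<^sup>2 - p\<^sup>2 = a - m" using assms unfolding p_def q_def by simp
  finally show ?thesis
    unfolding indep_profit_def p_def q_def by (simp add: diff_divide_distrib algebra_simps)
qed

lemma indep_profit_mono:
  assumes "0 \<le> m" "m \<le> a" "1 \<le> a" "z0 > 0" "2 * sqrt \<gamma> * z0 < 1"
  shows "indep_profit z0 \<gamma> m \<le> indep_profit z0 \<gamma> a"
  using indep_profit_strict_mono[OF assms(1) _ assms(3-5)] assms(2) by (cases "m = a") auto

lemma indep_profit_jump:
  assumes "0 \<le> i" "1 \<le> t" "z0 > 0" "\<gamma> \<ge> 0" "10 * sqrt \<gamma> * z0 < 3"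
  shows "indep_profit z0 \<gamma> i + 2 * t / (5 * z0) < indep_profit z0 \<gamma> (i + t)"
proof -
  have "t \<le> t * t" using assms by simp
  then have "i + t \<le> (sqrt i + t)\<^sup>2"
    using assms by (simp add: power2_eq_square algebra_simps add_increasing2)
  then have "sqrt (i + t) \<le> sqrt i + t" using assms by (intro real_le_lsqrt) auto
  then have "2 * sqrt \<gamma> * (sqrt (i + t) - sqrt i) \<le> 2 * sqrt \<gamma> * t"
    using assms by (intro mult_left_mono) auto
  also have "\<dots> < 3 * t / (5 * z0)" using assms by (simp add: field_simps)
  finally have "2 * sqrt \<gamma> * (sqrt (i + t) - sqrt i) < 3 * t / (5 * z0)" .
  moreover have "(i + t) / z0 = i / z0 + 2 * t / (5 * z0) + 3 * t / (5 * z0)"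
    using assms by (simp add: field_simps)
  ultimately show ?thesis unfolding indep_profit_def by (simp add: algebra_simps)
qed

lemma z0_lt_sqrt_div:
  assumes "1 \<le> a" "\<gamma> > 0" "z0 > 0" "2 * sqrt \<gamma> * z0 < 1"
  shows "z0 < sqrt (a / \<gamma>)"
proof -
  have "z0 * sqrt \<gamma> < 2 * sqrt \<gamma> * z0" "1 \<le> sqrt a" using assms by auto
  then have "z0 * sqrt \<gamma> < sqrt a" using assms by linarith
  then show ?thesis using assms by (simp add: real_sqrt_divide pos_less_divide_eq)
qed

lemma z0_small_bounds:
  assumes "\<gamma> > 0" "z0 < 1 / (2 * sqrt \<gamma>) * ((real n + 1) / (2 * real n + 1))"
  shows "2 * sqrt \<gamma> * z0 < 1" and "2 \<le> n \<Longrightarrow> 10 * sqrt \<gamma> * z0 < 3"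
proof -
  define r where "r = (real n + 1) / (2 * real n + 1)"
  have "z0 < r / (2 * sqrt \<gamma>)" using assms(2) unfolding r_def by (simp add: ac_simps)
  then have bound: "2 * sqrt \<gamma> * z0 < r"
    using assms(1) pos_less_divide_eq[of "2 * sqrt \<gamma>" z0 r] by (simp add: mult.commute)
  moreover have "r \<le> 1" unfolding r_def by simp
  ultimately show "2 * sqrt \<gamma> * z0 < 1" by linarith
  assume "2 \<le> n"
  then have "r \<le> 3 / 5" unfolding r_def by (simp add: field_simps)
  then show "10 * sqrt \<gamma> * z0 < 3" using bound by linarith
qed

lemma inverse_tangent_le:
  fixes a b :: real
  assumes "a > 0" "b > 0"
  shows "- (1 / b) \<le> - (1 / a) + (b - a) / a\<^sup>2"
proof -
  have "0 \<le> (a - b)\<^sup>2 / (a\<^sup>2 * b)" using assms by simp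
  also have "\<dots> = - (1 / a) + (b - a) / a\<^sup>2 + 1 / b"
    using assms by (simp add: field_simps power2_eq_square)
  finally show ?thesis by simp
qed

lemma inverse_affine_antimono:
  assumes "z0 > 0" "z \<ge> 0" "k \<le> l"
  shows "1 / (z0 + real l * z) \<le> 1 / (z0 + real k * z)"
proof -
  have "0 < z0 + real k * z" "z0 + real k * z \<le> z0 + real l * z"
    using assms by (auto simp: add_pos_nonneg mult_right_mono)
  then show ?thesis by (simp add: frac_le)
qed

lemma finite_independent_cards:
  assumes "finite V"
  shows "finite {card S | S. independent V E S}"
proof -
  have "{card S | S. independent V E S} \<subseteq> card ` Pow V" unfolding independent_def by auto
  then show ?thesis using assms by (meson finite_Pow_iff finite_imageI finite_subset)
qed

lemma independent_card_le_alpha: "finite V \<Longrightarrow> independent V E S \<Longrightarrow> card S \<le> alpha V E"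
  unfolding alpha_def using finite_independent_cards by (intro Max_ge) auto

lemma exists_independent_card_alpha:
  assumes "finite V"
  shows "\<exists>S. independent V E S \<and> card S = alpha V E"
proof -
  have "{card S | S. independent V E S} \<noteq> {}" unfolding independent_def by blast
  then show ?thesis
    using Max_in[OF finite_independent_cards[OF assms, of E]] unfolding alpha_def by auto
qed

lemma one_le_alpha:
  assumes "finite V" "V \<noteq> {}"
  shows "1 \<le> alpha V E"
proof -
  obtain v where "v \<in> V" "independent V E {v}" using assms unfolding independent_def by auto
  then show ?thesis using independent_card_le_alpha[OF \<open>finite V\<close>] by fastforce
qed

lemma independent_Un:
  assumes "\<forall>i\<in>V. \<forall>j\<in>V. E i j \<longleftrightarrow> E j i" "independent V E S" "independent V E T"
    and "\<forall>i\<in>S. \<forall>j\<in>T. i \<noteq> j \<longrightarrow> \<not> E i j"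
  shows "independent V E (S \<union> T)"
proof -
  have "\<not> E i j" if "i \<in> T" "j \<in> S" "i \<noteq> j" for i j
    using assms that unfolding independent_def by (metis subsetD)
  then show ?thesis using assms unfolding independent_def by auto
qed

lemma mcount_mono: "finite V \<Longrightarrow> M' \<subseteq> M \<Longrightarrow> mcount V E M' i \<le> mcount V E M i"
  unfolding mcount_def nbrs_def by (rule card_mono) auto

lemma mcount_eq_0_iff:
  "finite M \<Longrightarrow> mcount V E M i = 0 \<longleftrightarrow> (\<forall>j\<in>M \<inter> V. j \<noteq> i \<longrightarrow> \<not> E i j)"
  unfolding mcount_def nbrs_def by auto

lemma independent_iff_mcount:
  "finite S \<Longrightarrow> independent V E S \<longleftrightarrow> S \<subseteq> V \<and> (\<forall>i\<in>S. mcount V E S i = 0)"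
  unfolding independent_def mcount_eq_0_iff by auto

lemma not_independent_two_le_card:
  assumes "finite V" "M \<subseteq> V" "\<not> independent V E M"
  shows "2 \<le> card V"
proof -
  obtain i j where "i \<in> M" "j \<in> M" "i \<noteq> j" using assms unfolding independent_def by auto
  then have "{i, j} \<subseteq> V" "card {i, j} = 2" using assms by auto
  then show ?thesis using assms card_mono by metis
qed

definition isolated :: "'a set \<Rightarrow> ('a \<Rightarrow> 'a \<Rightarrow> bool) \<Rightarrow> 'a set \<Rightarrow> 'a set" where
  "isolated V E M = {i \<in> M. mcount V E M i = 0}"

lemma isolated_no_edge:
  "finite M \<Longrightarrow> i \<in> isolated V E M \<Longrightarrow> j \<in> M \<inter> V \<Longrightarrow> j \<noteq> i \<Longrightarrow> \<not> E i j"
  unfolding isolated_def mcount_eq_0_iff by blast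

lemma independent_isolated:
  assumes "finite V" "M \<subseteq> V"
  shows "independent V E (isolated V E M)"
  using assms isolated_no_edge[of M] finite_subset unfolding independent_def isolated_def by fastforce

lemma mcount_Diff_isolated:
  assumes finV: "finite V" and symE: "\<forall>i\<in>V. \<forall>j\<in>V. E i j \<longleftrightarrow> E j i"
    and "M \<subseteq> V" "i \<in> M - isolated V E M"
  shows "mcount V E (M - isolated V E M) i = mcount V E M i"
proof -
  have finM: "finite M" using assms finite_subset by blast
  have "nbrs V E i \<inter> M \<subseteq> nbrs V E i \<inter> (M - isolated V E M)"
  proof
    fix j assume j: "j \<in> nbrs V E i \<inter> M"
    then have "E j i" using symE assms unfolding nbrs_def by auto
    then have "j \<notin> isolated V E M"
      using isolated_no_edge[OF finM, of j V E i] j assms unfolding nbrs_def by auto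
    then show "j \<in> nbrs V E i \<inter> (M - isolated V E M)" using j by blast
  qed
  then have "nbrs V E i \<inter> (M - isolated V E M) = nbrs V E i \<inter> M" by blast
  then show ?thesis unfolding mcount_def by simp
qed

lemma caro_wei:
  assumes finV: "finite V" and symE: "\<forall>i\<in>V. \<forall>j\<in>V. E i j \<longleftrightarrow> E j i" and "M \<subseteq> V"
  shows "\<exists>T\<subseteq>M. independent V E T \<and> (\<Sum>i\<in>M. 1 / (real (mcount V E M i) + 1)) \<le> card T"
  using finite_subset[OF assms(3) finV] assms(3)
proof (induction M rule: finite_psubset_induct)
  case (psubset M)
  show ?case
  proof (cases "M = {}")
    case True
    then show ?thesis by (auto simp: independent_def)
  next
    case False
    let ?w = "\<lambda>M i. 1 / (real (mcount V E M i) + 1)"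
    \<comment> \<open>Remove a vertex \<open>v\<close> of least degree together with its neighbours: they contribute at
      most \<open>1\<close> to the sum, and no degree in the rest increases.\<close>
    obtain v where v: "v \<in> M" and vmin: "\<forall>i\<in>M. mcount V E M v \<le> mcount V E M i"
      using psubset.hyps False by (metis arg_min_if_finite(1,2) not_le)
    define N where "N = insert v (nbrs V E v \<inter> M)"
    have N: "N \<subseteq> M" "card N = mcount V E M v + 1"
      using v psubset.hyps unfolding N_def mcount_def nbrs_def by auto
    have "M - N \<subset> M" using v unfolding N_def by auto
    then obtain T where T: "T \<subseteq> M - N" "independent V E T" "sum (?w (M - N)) (M - N) \<le> card T"
      using psubset.IH psubset.prems by (meson order.trans psubset_imp_subset)
    have vT: "v \<notin> T" and finT: "finite T"
      using T(1) psubset.hyps N_def finite_subset by auto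
    have "independent V E ({v} \<union> T)"
      using T psubset.prems v unfolding N_def nbrs_def
      by (intro independent_Un[OF symE _ T(2)]) (auto simp: independent_def)
    moreover have "sum (?w M) N \<le> 1"
    proof -
      have "sum (?w M) N \<le> sum (\<lambda>_. ?w M v) N"
        using vmin N(1) by (intro sum_mono) (auto simp: frac_le)
      also have "\<dots> = 1" using N(2) by simp
      finally show ?thesis .
    qed
    moreover have "sum (?w M) (M - N) \<le> sum (?w (M - N)) (M - N)"
      using mcount_mono[OF finV, of "M - N" M] by (intro sum_mono) (auto simp: frac_le)
    moreover have "sum (?w M) M = sum (?w M) N + sum (?w M) (M - N)"
      using N(1) psubset.hyps by (metis sum.subset_diff add.commute)
    ultimately show ?thesis
      using T vT finT v by (intro exI[of _ "{v} \<union> T"]) auto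
  qed
qed

lemma sum_max_price_le_caro_wei:
  assumes finV: "finite V" and symE: "\<forall>i\<in>V. \<forall>j\<in>V. E i j \<longleftrightarrow> E j i"
    and "J \<subseteq> V" "J \<noteq> {}" "\<forall>i\<in>J. 1 \<le> mcount V E J i" "z0 > 0" "z > 0"
  shows "\<exists>T\<subseteq>J. independent V E T \<and> 1 \<le> card T \<and>
    (\<Sum>i\<in>J. max_price z0 z (mcount V E J i)) \<le> 2 * card T / (5 * z0)"
proof -
  obtain T where T: "T \<subseteq> J" "independent V E T"
    "(\<Sum>i\<in>J. 1 / (real (mcount V E J i) + 1)) \<le> card T"
    using caro_wei[OF finV symE \<open>J \<subseteq> V\<close>] by blast
  have finJ: "finite J" using assms finite_subset by blast
  have "(\<Sum>i\<in>J. max_price z0 z (mcount V E J i)) \<le> (\<Sum>i\<in>J. 2 / (5 * z0) * (1 / (real (mcount V E J i) + 1)))"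
  proof (rule sum_mono)
    fix i assume "i \<in> J"
    then have "max_price z0 z (mcount V E J i) \<le> 2 / (5 * (real (mcount V E J i) + 1) * z0)"
      using assms by (intro max_price_le) auto
    then show "max_price z0 z (mcount V E J i) \<le> 2 / (5 * z0) * (1 / (real (mcount V E J i) + 1))"
      by (simp add: algebra_simps)
  qed
  also have "\<dots> = 2 / (5 * z0) * (\<Sum>i\<in>J. 1 / (real (mcount V E J i) + 1))"
    by (simp add: sum_distrib_left)
  also have "\<dots> \<le> 2 / (5 * z0) * card T"
    using T(3) \<open>z0 > 0\<close> by (intro mult_left_mono) auto
  finally have "(\<Sum>i\<in>J. max_price z0 z (mcount V E J i)) \<le> 2 * card T / (5 * z0)" by simp
  moreover have "0 < (\<Sum>i\<in>J. 1 / (real (mcount V E J i) + 1))"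
    using finJ \<open>J \<noteq> {}\<close> by (intro sum_pos) auto
  then have "1 \<le> card T" using T(3) by linarith
  ultimately show ?thesis using T by blast
qed

lemma feasible_profit_le:
  assumes "feasible V E z0 (M, z, p)"
  shows "profit \<gamma> (M, z, p) \<le> (\<Sum>i\<in>M. max_price z0 z (mcount V E M i)) - \<gamma> * z"
  using assms unfolding feasible_def profit_def max_price_def by (simp add: sum_mono)

lemma independent_target_profit_le:
  assumes "finite V" "feasible V E z0 (M, z, p)" "independent V E M" "z0 > 0" "\<gamma> \<ge> 0"
  shows "profit \<gamma> (M, z, p) \<le> indep_profit z0 \<gamma> (card M)"
proof -
  have "M \<subseteq> V" "z > 0" using assms(2) unfolding feasible_def by auto
  then have "\<forall>i\<in>M. mcount V E M i = 0"
    using assms(1,3) independent_iff_mcount[of M V E] finite_subset by auto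
  then have "profit \<gamma> (M, z, p) \<le> card M * max_price z0 z 0 - \<gamma> * z"
    using feasible_profit_le[OF assms(2)] by simp
  also have "\<dots> \<le> indep_profit z0 \<gamma> (card M)"
    using assms \<open>z > 0\<close> by (intro unlinked_profit_le_indep_profit) auto
  finally show ?thesis .
qed

lemma optimal_profit_ge_indep_profit:
  assumes finV: "finite V" and "V \<noteq> {}" "z0 > 0" "\<gamma> > 0" "2 * sqrt \<gamma> * z0 < 1"
    and opt: "optimal V E z0 \<gamma> C"
  shows "indep_profit z0 \<gamma> (alpha V E) \<le> profit \<gamma> C"
proof -
  define a where "a = alpha V E"
  define z where "z = sqrt (a / \<gamma>) - z0"
  obtain S where S: "independent V E S" "card S = a"
    using exists_independent_card_alpha[OF finV] a_def by blast
  have a: "1 \<le> a" using one_le_alpha[OF finV \<open>V \<noteq> {}\<close>] a_def by simp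
  then have "z > 0" using z0_lt_sqrt_div assms unfolding z_def by simp
  have "S \<subseteq> V" "finite S" using S(1) finV finite_subset unfolding independent_def by auto
  then have "\<forall>i\<in>S. mcount V E S i = 0"
    using S(1) independent_iff_mcount[of S V E] by auto
  then have "feasible V E z0 (S, z, \<lambda>_. max_price z0 z 0)"
    using \<open>S \<subseteq> V\<close> \<open>z > 0\<close> \<open>z0 > 0\<close> max_price_nonneg
    unfolding feasible_def max_price_def[symmetric] by auto
  then have "profit \<gamma> (S, z, \<lambda>_. max_price z0 z 0) \<le> profit \<gamma> C"
    using opt unfolding optimal_def by blast
  moreover have "profit \<gamma> (S, z, \<lambda>_. max_price z0 z 0) = indep_profit z0 \<gamma> a"
    using unlinked_profit_at_optimal_precision[of a \<gamma> z0] a S(2) \<open>\<gamma> > 0\<close>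
    unfolding profit_def z_def by simp
  ultimately show ?thesis unfolding a_def by simp
qed

lemma feasible_profit_le_isolated_split:
  assumes finV: "finite V" and symE: "\<forall>i\<in>V. \<forall>j\<in>V. E i j \<longleftrightarrow> E j i"
    and feas: "feasible V E z0 (M, z, p)"
  shows "profit \<gamma> (M, z, p) \<le> (card (isolated V E M) * max_price z0 z 0 - \<gamma> * z)
    + (\<Sum>i\<in>M - isolated V E M. max_price z0 z (mcount V E (M - isolated V E M) i))"
proof -
  define I J where "I = isolated V E M" and "J = M - isolated V E M"
  have MV: "M \<subseteq> V" using feas unfolding feasible_def by auto
  have finM: "finite M" using MV finV finite_subset by blast
  have IM: "I \<subseteq> M" unfolding I_def isolated_def by auto
  have "(\<Sum>i\<in>M. max_price z0 z (mcount V E M i))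
      = (\<Sum>i\<in>J. max_price z0 z (mcount V E M i)) + (\<Sum>i\<in>I. max_price z0 z (mcount V E M i))"
    using sum.subset_diff[OF IM finM] unfolding J_def I_def .
  also have "(\<Sum>i\<in>I. max_price z0 z (mcount V E M i)) = card I * max_price z0 z 0"
    unfolding I_def isolated_def by simp
  also have "(\<Sum>i\<in>J. max_price z0 z (mcount V E M i)) = (\<Sum>i\<in>J. max_price z0 z (mcount V E J i))"
    using mcount_Diff_isolated[OF finV symE MV] unfolding J_def by simp
  finally show ?thesis using feasible_profit_le[OF feas, of \<gamma>] unfolding I_def J_def by simp
qed

lemma linked_target_profit_lt:
  assumes finV: "finite V" and symE: "\<forall>i\<in>V. \<forall>j\<in>V. E i j \<longleftrightarrow> E j i"
    and "z0 > 0" "\<gamma> > 0" "10 * sqrt \<gamma> * z0 < 3"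
    and feas: "feasible V E z0 (M, z, p)" and "\<not> independent V E M"
  shows "profit \<gamma> (M, z, p) < indep_profit z0 \<gamma> (alpha V E)"
proof -
  define I J where "I = isolated V E M" and "J = M - isolated V E M"
  have MV: "M \<subseteq> V" and "z > 0" using feas unfolding feasible_def by auto
  have finM: "finite M" using MV finV finite_subset by blast
  have "J \<noteq> {}"
  proof
    assume "J = {}"
    then have "isolated V E M = M" unfolding J_def isolated_def by auto
    then show False using independent_isolated[OF finV MV, of E] \<open>\<not> independent V E M\<close> by simp
  qed
  moreover have "\<forall>i\<in>J. 1 \<le> mcount V E J i"
    using mcount_Diff_isolated[OF finV symE MV] unfolding J_def isolated_def by auto
  moreover have "J \<subseteq> V" using MV unfolding J_def by auto
  ultimately obtain T where T: "T \<subseteq> J" "independent V E T" "1 \<le> card T"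
      "(\<Sum>i\<in>J. max_price z0 z (mcount V E J i)) \<le> 2 * card T / (5 * z0)"
    using sum_max_price_le_caro_wei[OF finV symE _ _ _ \<open>z0 > 0\<close> \<open>z > 0\<close>] by blast
  have "\<forall>i\<in>I. \<forall>j\<in>T. i \<noteq> j \<longrightarrow> \<not> E i j"
    using isolated_no_edge[OF finM] T(1) MV unfolding I_def J_def by blast
  then have "independent V E (I \<union> T)"
    using independent_Un[OF symE _ T(2)] independent_isolated[OF finV MV] unfolding I_def by blast
  moreover have "card (I \<union> T) = card I + card T"
    using T(1) finM finite_subset unfolding J_def I_def isolated_def by (intro card_Un_disjoint) auto
  ultimately have card_IT: "card I + card T \<le> alpha V E"
    using independent_card_le_alpha[OF finV] by metis
  have "profit \<gamma> (M, z, p) \<le> (card I * max_price z0 z 0 - \<gamma> * z) + 2 * card T / (5 * z0)"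
    using feasible_profit_le_isolated_split[OF finV symE feas, of \<gamma>] T(4) unfolding I_def J_def by simp
  also have "\<dots> \<le> indep_profit z0 \<gamma> (card I) + 2 * card T / (5 * z0)"
    using unlinked_profit_le_indep_profit[of "card I" z0 z \<gamma>] assms \<open>z > 0\<close> by simp
  also have "\<dots> < indep_profit z0 \<gamma> (card I + card T)"
    using indep_profit_jump[of "card I" "card T" z0 \<gamma>] T(3) assms by simp
  also have "\<dots> \<le> indep_profit z0 \<gamma> (alpha V E)"
    using indep_profit_mono[of "card I + card T" "alpha V E" z0 \<gamma>] card_IT T(3) assms by simp
  finally show ?thesis .
qed

lemma optimal_target_max_independent:
  assumes finV: "finite V" and symE: "\<forall>i\<in>V. \<forall>j\<in>V. E i j \<longleftrightarrow> E j i" and "V \<noteq> {}"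
    and "z0 > 0" "\<gamma> > 0" "2 * sqrt \<gamma> * z0 < 1" "2 \<le> card V \<Longrightarrow> 10 * sqrt \<gamma> * z0 < 3"
    and opt: "optimal V E z0 \<gamma> (M, z, p)"
  shows "independent V E M \<and> card M = alpha V E"
proof -
  have feas: "feasible V E z0 (M, z, p)" using opt unfolding optimal_def by blast
  then have MV: "M \<subseteq> V" unfolding feasible_def by simp
  have lower: "indep_profit z0 \<gamma> (alpha V E) \<le> profit \<gamma> (M, z, p)"
    using optimal_profit_ge_indep_profit[OF finV] opt assms by blast
  have indep: "independent V E M"
  proof (rule ccontr)
    assume "\<not> independent V E M"
    moreover from this have "10 * sqrt \<gamma> * z0 < 3"
      using not_independent_two_le_card[OF finV MV] assms by blast
    ultimately show False
      using linked_target_profit_lt[OF finV symE _ _ _ feas] lower assms by fastforce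
  qed
  have "card M \<le> alpha V E" using independent_card_le_alpha[OF finV indep] .
  moreover have "\<not> card M < alpha V E"
  proof
    assume "card M < alpha V E"
    then have "indep_profit z0 \<gamma> (card M) < indep_profit z0 \<gamma> (alpha V E)"
      using one_le_alpha[OF finV \<open>V \<noteq> {}\<close>] assms by (intro indep_profit_strict_mono) auto
    then show False
      using independent_target_profit_le[OF finV feas indep, of \<gamma>] lower assms by simp
  qed
  ultimately show ?thesis using indep by simp
qed

lemma sum_list_map_kvec: "sum_list (map F (kvec V E M)) = (\<Sum>i\<in>V - M. F (mcount V E M i))"
  unfolding kvec_def
  by (simp add: rev_map[symmetric] sum_mset_sum_list[symmetric]
      sum_unfold_sum_mset image_mset.compositionality comp_def)

lemma length_kvec:
  assumes "finite V" "M \<subseteq> V"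
  shows "length (kvec V E M) = card V - card M"
proof -
  have "length (kvec V E M) = card (V - M)" unfolding kvec_def
    by (metis length_rev mset_sorted_list_of_multiset size_mset size_image_mset size_mset_set)
  then show ?thesis using assms by (simp add: card_Diff_subset finite_subset)
qed

lemma welfare_eq_kvec:
  "welfare V E z0 \<gamma> M
    = - (card M / z0) - sum_list (map (\<lambda>k. 1 / (z0 + real k * (sqrt (alpha V E / \<gamma>) - z0))) (kvec V E M))"
  unfolding welfare_def sum_list_map_kvec by simp

lemma sum_list_map_mono_list_all2:
  fixes f :: "'a \<Rightarrow> 'b :: ordered_comm_monoid_add"
  assumes "list_all2 P xs ys" "\<And>x y. P x y \<Longrightarrow> f x \<le> f y"
  shows "sum_list (map f xs) \<le> sum_list (map f ys)"
  using assms(1) by (induction rule: list_all2_induct) (auto intro: add_mono assms(2))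

lemma mono_Min_affine:
  fixes c d :: "'a \<Rightarrow> real"
  assumes "finite K" "\<forall>k\<in>K. d k \<ge> 0"
  shows "mono (\<lambda>x. Min ((\<lambda>k. c k + d k * x) ` K))"
proof (cases "K = {}")
  case False
  show ?thesis
  proof (rule monoI)
    fix x y :: real assume "x \<le> y"
    have "Min ((\<lambda>k. c k + d k * y) ` K) \<in> (\<lambda>k. c k + d k * y) ` K"
      using assms False by (intro Min_in) auto
    then obtain k where k: "k \<in> K" "Min ((\<lambda>k. c k + d k * y) ` K) = c k + d k * y" by auto
    have "Min ((\<lambda>k. c k + d k * x) ` K) \<le> c k + d k * x" using k assms by (intro Min_le) auto
    also have "\<dots> \<le> c k + d k * y" using k assms \<open>x \<le> y\<close> by (simp add: mult_left_mono)
    finally show "Min ((\<lambda>k. c k + d k * x) ` K) \<le> Min ((\<lambda>k. c k + d k * y) ` K)" using k by simp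
  qed
qed (simp add: mono_def)

lemma concave_on_Min_affine:
  fixes c d :: "'a \<Rightarrow> real"
  assumes "finite K" "K \<noteq> {}"
  shows "concave_on UNIV (\<lambda>x. Min ((\<lambda>k. c k + d k * x) ` K))"
  unfolding concave_on_iff
proof (intro conjI ballI allI impI convex_UNIV)
  fix x y a b :: real assume ab: "0 \<le> a" "0 \<le> b" "a + b = 1"
  let ?u = "\<lambda>x. Min ((\<lambda>k. c k + d k * x) ` K)"
  show "a * ?u x + b * ?u y \<le> ?u (a *\<^sub>R x + b *\<^sub>R y)"
  proof (subst Min_ge_iff, safe)
    fix k assume "k \<in> K"
    then have "?u x \<le> c k + d k * x" "?u y \<le> c k + d k * y" using assms by auto
    then have "a * ?u x + b * ?u y \<le> a * (c k + d k * x) + b * (c k + d k * y)"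
      using ab by (intro add_mono mult_left_mono) auto
    also have "\<dots> = c k + d k * (a *\<^sub>R x + b *\<^sub>R y)"
      using ab by (simp add: algebra_simps flip: distrib_right)
    finally show "a * ?u x + b * ?u y \<le> c k + d k * (a *\<^sub>R x + b *\<^sub>R y)" .
  qed (use assms in auto)
qed

lemma ssd_sum_list_le:
  assumes "ssd xs ys" "length xs = length ys" "mono u" "concave_on UNIV u"
  shows "sum_list (map u ys) \<le> sum_list (map u xs)"
proof (cases "xs = []")
  case False
  then have "sum_list (map u ys) / length xs \<le> sum_list (map u xs) / length xs"
    using assms unfolding ssd_def by auto
  then show ?thesis using False by (simp add: divide_le_cancel)
qed (use assms in simp)

lemma sum_list_inverse_affine_le_of_ssd:
  fixes xs ys :: "nat list"
  assumes "z0 > 0" "z > 0" "length xs = length ys" "ssd (map real xs) (map real ys)"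
  shows "sum_list (map (\<lambda>k. 1 / (z0 + real k * z)) xs) \<le> sum_list (map (\<lambda>k. 1 / (z0 + real k * z)) ys)"
proof -
  define f where "f k = 1 / (z0 + real k * z)" for k
  define K where "K = {..sum_list xs + sum_list ys}"
  \<comment> \<open>the lower envelope of the tangents of \<open>x \<mapsto> - 1 / (z0 + x * z)\<close> at the points of \<open>K\<close>\<close>
  define u where "u x = Min ((\<lambda>k. (- f k - z * (f k)\<^sup>2 * k) + z * (f k)\<^sup>2 * x) ` K)" for x
  have "mono u" "concave_on UNIV u"
    unfolding u_def[abs_def] K_def using \<open>z > 0\<close>
    by (intro mono_Min_affine concave_on_Min_affine; simp)+
  have u_eq: "u (real j) = - f j" if "j \<in> K" for j
    unfolding u_def
  proof (rule Min_eqI)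
    fix t assume "t \<in> (\<lambda>k. (- f k - z * (f k)\<^sup>2 * k) + z * (f k)\<^sup>2 * real j) ` K"
    then obtain k where t: "t = - f k - z * (f k)\<^sup>2 * k + z * (f k)\<^sup>2 * real j" by auto
    define a where "a = z0 + real k * z"
    have "0 < a" "0 < z0 + real j * z" using assms unfolding a_def by (auto simp: add_pos_nonneg)
    moreover have "t = - (1 / a) + z * (real j - real k) * (1 / a)\<^sup>2"
      using t unfolding f_def a_def[symmetric] by (simp add: algebra_simps)
    moreover have "z * (real j - real k) = z0 + real j * z - a" unfolding a_def by (simp add: algebra_simps)
    ultimately have "t = - (1 / a) + (z0 + real j * z - a) / a\<^sup>2" by (simp add: power_one_over)
    then show "- f j \<le> t"
      unfolding f_def using inverse_tangent_le \<open>0 < a\<close> \<open>0 < z0 + real j * z\<close> by simp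
  qed (use that K_def in \<open>auto intro!: image_eqI[where x=j]\<close>)
  have sum_u: "sum_list (map u (map real ws)) = - sum_list (map f ws)" if "set ws \<subseteq> K" for ws
    using that u_eq by (induction ws) auto
  have "set xs \<subseteq> K" "set ys \<subseteq> K" unfolding K_def by (auto simp: member_le_sum_list trans_le_add1 trans_le_add2)
  then show ?thesis
    using ssd_sum_list_le[of "map real xs" "map real ys" u] assms \<open>mono u\<close> \<open>concave_on UNIV u\<close> sum_u
    unfolding f_def by simp
qed

lemma sum_list_inverse_affine_le:
  fixes xs ys :: "nat list"
  assumes "z0 > 0" "z > 0" "length xs = length ys"
    and "list_all2 (\<ge>) xs ys \<or> ssd (map real xs) (map real ys)"
  shows "sum_list (map (\<lambda>k. 1 / (z0 + real k * z)) xs) \<le> sum_list (map (\<lambda>k. 1 / (z0 + real k * z)) ys)"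
  using assms(4)
proof
  assume "list_all2 (\<ge>) xs ys"
  then show ?thesis
    by (rule sum_list_map_mono_list_all2) (use assms inverse_affine_antimono in auto)
next
  assume "ssd (map real xs) (map real ys)"
  then show ?thesis using sum_list_inverse_affine_le_of_ssd assms by blast
qed

theorem proposition3:
  fixes V :: "'a set" and E :: "'a \<Rightarrow> 'a \<Rightarrow> bool" and z0 \<gamma> :: real
    and C C' :: "'a contract"
  assumes finV: "finite V"
    and symE: "\<forall>i\<in>V. \<forall>j\<in>V. E i j \<longleftrightarrow> E j i"
    and irrE: "\<forall>i\<in>V. \<not> E i i"
    and z0pos: "z0 > 0" and gpos: "\<gamma> > 0"
    and z0small: "z0 < 1 / (2 * sqrt \<gamma>) * ((real (card V) + 1) / (2 * real (card V) + 1))"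
    and optC: "optimal V E z0 \<gamma> C" and optC': "optimal V E z0 \<gamma> C'"
    and cond: "list_all2 (\<ge>) (kvec V E (target C)) (kvec V E (target C'))
      \<or> (sum_list (kvec V E (target C)) = sum_list (kvec V E (target C'))
         \<and> ssd (map real (kvec V E (target C))) (map real (kvec V E (target C'))))"
  shows "welfare V E z0 \<gamma> (target C) \<ge> welfare V E z0 \<gamma> (target C')"
proof (cases "V = {}")
  case True
  then show ?thesis
    using optC optC' unfolding optimal_def feasible_def target_def by (auto split: prod.splits)
next
  case False
  obtain M z p where C: "C = (M, z, p)" by (cases C) auto
  obtain M' z' p' where C': "C' = (M', z', p')" by (cases C') auto
  note small = z0_small_bounds[OF gpos z0small]
  have M: "independent V E M \<and> card M = alpha V E" and M': "independent V E M' \<and> card M' = alpha V E"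
    using optimal_target_max_independent[OF finV symE False z0pos gpos small] optC optC'
    unfolding C C' by blast+
  then have "length (kvec V E M) = length (kvec V E M')"
    using finV length_kvec unfolding independent_def by metis
  moreover have "z0 < sqrt (alpha V E / \<gamma>)"
    using z0_lt_sqrt_div one_le_alpha[OF finV False] gpos z0pos small(1) by simp
  ultimately show ?thesis
    using sum_list_inverse_affine_le[of z0 "sqrt (alpha V E / \<gamma>) - z0" "kvec V E M" "kvec V E M'"]
      cond z0pos M M'
    unfolding C C' target_def welfare_eq_kvec by auto
qed

end
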